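(* Let $0<\lambda\le\Lambda$ and let $\mathcal P^+$ be Pucci's maximal operator with parameters $\lambda,\Lambda$. Define $\Phi:\mathbb R^d\times\mathbb R\to\mathbb R$ by $\Phi(x,t)=t^{-\frac{d\lambda}{2\Lambda}}e^{-\frac{|x|^2}{4\Lambda t}}$ for $t>0$ and $\Phi(x,t)=0$ for $t\le0$. Then $\Phi(kx,k^2t)=k^{-\frac{d\lambda}{\Lambda}}\Phi(x,t)$ for all $k>0$, and $\Phi$ is a (viscosity) supersolution of $\partial_t\Phi-\mathcal P^+(D^2\Phi)\ge0$ in $\mathbb R^{d+1}\setminus\{(0,0)\}$.
   Context: $\mathcal P^+(M)=\Lambda\,\mathrm{Tr}M_+-\lambda\,\mathrm{Tr}M_-$ for real symmetric $d\times d$ matrices $M$, where $M_\pm\ge0$ are the positive and negative parts of $M$. *)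

theory Defs
  imports "HOL-Analysis.Analysis"
begin

definition symmetric_mat :: "real^'n^'n \<Rightarrow> bool" where
  "symmetric_mat M \<longleftrightarrow> transpose M = M"

definition psd :: "real^'n^'n \<Rightarrow> bool" where
  "psd M \<longleftrightarrow> symmetric_mat M \<and> (\<forall>v. 0 \<le> v \<bullet> (M *v v))"

definition pos_part :: "real^'n^'n \<Rightarrow> real^'n^'n" where
  "pos_part M = (THE P. \<exists>N. psd P \<and> psd N \<and> M = P - N \<and> P ** N = 0)"

definition neg_part :: "real^'n^'n \<Rightarrow> real^'n^'n" where
  "neg_part M = pos_part M - M"

definition pucci_max :: "real \<Rightarrow> real \<Rightarrow> real^'n^'n \<Rightarrow> real" where
  "pucci_max lam Lam M = Lam * trace (pos_part M) - lam * trace (neg_part M)"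

definition Phi :: "real \<Rightarrow> real \<Rightarrow> (real^'n) \<times> real \<Rightarrow> real" where
  "Phi lam Lam = (\<lambda>(x, t). if 0 < t
      then t powr (- (real CARD('n) * lam / (2 * Lam))) * exp (- (norm x)\<^sup>2 / (4 * Lam * t))
      else 0)"

definition lsc_at :: "('a::topological_space \<Rightarrow> real) \<Rightarrow> 'a \<Rightarrow> bool" where
  "lsc_at u y \<longleftrightarrow> (\<forall>c < u y. eventually (\<lambda>z. c < u z) (at y))"

definition C21_test :: "((real^'n) \<times> real \<Rightarrow> real) \<Rightarrow> ((real^'n) \<times> real \<Rightarrow> real^'n)
    \<Rightarrow> ((real^'n) \<times> real \<Rightarrow> real^'n^'n) \<Rightarrow> ((real^'n) \<times> real \<Rightarrow> real)
    \<Rightarrow> ((real^'n) \<times> real) set \<Rightarrow> bool" where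
  "C21_test phi Dx Dxx Dt U \<longleftrightarrow> open U \<and>
     (\<forall>(x, t) \<in> U.
        ((\<lambda>y. phi (y, t)) has_derivative (\<lambda>h. Dx (x, t) \<bullet> h)) (at x) \<and>
        ((\<lambda>y. Dx (y, t)) has_derivative (\<lambda>h. Dxx (x, t) *v h)) (at x) \<and>
        ((\<lambda>s. phi (x, s)) has_real_derivative Dt (x, t)) (at t)) \<and>
     continuous_on U phi \<and> continuous_on U Dx \<and> continuous_on U Dxx \<and> continuous_on U Dt"

definition visc_supersol :: "real \<Rightarrow> real \<Rightarrow> ((real^'n) \<times> real \<Rightarrow> real)
    \<Rightarrow> ((real^'n) \<times> real) set \<Rightarrow> bool" where
  "visc_supersol lam Lam u Omega \<longleftrightarrow>
     (\<forall>z \<in> Omega. lsc_at u z) \<and>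
     (\<forall>z0 \<in> Omega. \<forall>phi Dx Dxx Dt U.
        z0 \<in> U \<and> U \<subseteq> Omega \<and> C21_test phi Dx Dxx Dt U \<and>
        (\<forall>z \<in> U. u z - phi z \<ge> u z0 - phi z0)
        \<longrightarrow> Dt z0 - pucci_max lam Lam (Dxx z0) \<ge> 0)"

end

theory Submission
  imports Defs
begin

text \<open>For \<open>t > 0\<close> put \<open>c = 1/(2 Lam t)\<close>. Then \<open>Phi\<close> is smooth near \<open>(x, t)\<close>, its spatial Hessian is
  \<open>Phi (c\<^sup>2 x x\<^sup>T - c I)\<close> and \<open>\<partial>\<^sub>t Phi = Phi (Lam c\<^sup>2 |x|\<^sup>2 - lam c d)\<close>. A test function touching \<open>Phi\<close>
  from below at \<open>(x, t)\<close> has the same time derivative and a smaller Hessian; in an orthonormal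
  eigenbasis \<open>b\<close> of that Hessian every eigenvalue is at most \<open>Phi (c\<^sup>2 (x \<bullet> b)\<^sup>2 - c)\<close>, so by
  Parseval Pucci's operator is at most \<open>Phi (Lam c\<^sup>2 |x|\<^sup>2 - lam c d) = \<partial>\<^sub>t Phi\<close>. For \<open>t \<le> 0\<close>,
  \<open>Phi\<close> vanishes at and before the contact time, so the test function has a spatial maximum
  (Hessian \<open>\<le> 0\<close>, hence Pucci's operator \<open>\<le> 0\<close>) and is nondecreasing in time.\<close>

section \<open>Orthonormal eigenbases of symmetric matrices\<close>

lemma matrix_vector_mul_inner_transpose: "((A::real^'n^'n) *v x) \<bullet> y = x \<bullet> (transpose A *v y)"
  by (metis dot_lmul_matrix inner_commute transpose_matrix_vector)

lemma symmetric_mat_iff_inner: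
  "symmetric_mat (A::real^'n^'n) \<longleftrightarrow> (\<forall>x y. (A *v x) \<bullet> y = x \<bullet> (A *v y))"
proof
  assume "symmetric_mat A"
  then show "\<forall>x y. (A *v x) \<bullet> y = x \<bullet> (A *v y)"
    by (metis matrix_vector_mul_inner_transpose symmetric_mat_def)
next
  assume h: "\<forall>x y. (A *v x) \<bullet> y = x \<bullet> (A *v y)"
  have "transpose A *v y = A *v y" for y
  proof -
    have "\<forall>x. x \<bullet> (transpose A *v y - A *v y) = 0"
      using h by (simp add: inner_diff_right matrix_vector_mul_inner_transpose)
    then show ?thesis by (metis inner_eq_zero_iff right_minus_eq)
  qed
  then show "symmetric_mat A" unfolding symmetric_mat_def by (simp add: matrix_eq)
qed

lemma symmetric_mat_inner: "symmetric_mat (A::real^'n^'n) \<Longrightarrow> (A *v x) \<bullet> y = x \<bullet> (A *v y)"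
  using symmetric_mat_iff_inner by blast

definition orthonormal_basis :: "'a::euclidean_space set \<Rightarrow> bool" where
  "orthonormal_basis B \<longleftrightarrow>
     finite B \<and> pairwise orthogonal B \<and> (\<forall>b\<in>B. norm b = 1) \<and> span B = UNIV"

lemma orthonormal_basis_inner:
  assumes "orthonormal_basis B" "b \<in> B" "c \<in> B"
  shows "b \<bullet> c = (if b = c then 1 else 0)"
  using assms unfolding orthonormal_basis_def pairwise_def orthogonal_def
  by (auto simp: norm_eq_1)

lemma orthonormal_basis_expansion:
  assumes "orthonormal_basis B"
  shows "v = (\<Sum>b\<in>B. (b \<bullet> v) *\<^sub>R b)"
  using assms orthonormal_basis_expand[of B v]
  unfolding orthonormal_basis_def by (simp add: inner_commute)

lemma orthonormal_basis_parseval: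
  assumes "orthonormal_basis B"
  shows "v \<bullet> w = (\<Sum>b\<in>B. (b \<bullet> v) * (b \<bullet> w))"
proof -
  have "v \<bullet> w = (\<Sum>b\<in>B. (b \<bullet> v) *\<^sub>R b) \<bullet> w"
    using orthonormal_basis_expansion[OF assms] by metis
  then show ?thesis by (simp add: inner_sum_left)
qed

lemma card_orthonormal_basis:
  assumes "orthonormal_basis (B::'a::euclidean_space set)"
  shows "card B = DIM('a)"
proof -
  have "independent B"
    using assms unfolding orthonormal_basis_def
    by (intro pairwise_orthogonal_independent) auto
  then have "dim (span B) = card B" by (rule dim_span_eq_card_independent)
  then show ?thesis using assms unfolding orthonormal_basis_def by simp
qed

lemma trace_eq_sum_orthonormal_basis:
  assumes "orthonormal_basis B"
  shows "trace (A::real^'n^'n) = (\<Sum>b\<in>B. b \<bullet> (A *v b))"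
proof -
  have e1: "b \<bullet> (A *v axis i 1) = (transpose A *v b) \<bullet> axis i 1" for b i
    by (metis matrix_vector_mul_inner_transpose transpose_transpose)
  have "trace A = (\<Sum>i\<in>UNIV. axis i 1 \<bullet> (A *v axis i 1))"
    by (simp add: trace_def inner_axis' matrix_vector_mul_component inner_axis)
  also have "\<dots> = (\<Sum>i\<in>UNIV. \<Sum>b\<in>B. (b \<bullet> axis i 1) * (b \<bullet> (A *v axis i 1)))"
    by (intro sum.cong refl orthonormal_basis_parseval[OF assms])
  also have "\<dots> = (\<Sum>i\<in>UNIV. \<Sum>b\<in>B. b $ i * (transpose A *v b) $ i)"
    by (simp only: e1 inner_axis inner_real_def mult_1_right)
  also have "\<dots> = (\<Sum>b\<in>B. b \<bullet> (transpose A *v b))"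
    by (subst sum.swap) (simp only: inner_vec_def inner_real_def)
  also have "\<dots> = (\<Sum>b\<in>B. b \<bullet> (A *v b))"
    by (intro sum.cong refl) (metis inner_commute matrix_vector_mul_inner_transpose transpose_transpose)
  finally show ?thesis .
qed

lemma zero_if_linear_le_quadratic:
  fixes a C :: real
  assumes "\<And>s. 2 * s * a \<le> s\<^sup>2 * C"
  shows "a = 0"
proof (rule ccontr)
  assume "a \<noteq> 0"
  define t where "t = \<bar>C\<bar> + 1"
  define s where "s = a / t"
  have t: "t > 0" "C < 2 * t" by (simp_all add: t_def)
  have "2 * s * a * t\<^sup>2 \<le> s\<^sup>2 * C * t\<^sup>2"
    using assms[of s] by (simp add: mult_right_mono)
  then have "2 * a\<^sup>2 * t \<le> a\<^sup>2 * C"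
    using t by (simp add: s_def power2_eq_square field_simps)
  moreover have "a\<^sup>2 * C < a\<^sup>2 * (2 * t)" using \<open>a \<noteq> 0\<close> t by simp
  ultimately show False by (simp add: algebra_simps)
qed

text \<open>A unit vector maximising the Rayleigh quotient over an invariant subspace is an
  eigenvector: \<open>w = M u - m u\<close> lies in the subspace, is orthogonal to \<open>u\<close>, and perturbing \<open>u\<close>
  along \<open>w\<close> shows \<open>u \<bullet> M w = w \<bullet> w\<close> must vanish.\<close>

lemma symmetric_mat_rayleigh_max_eigenvector:
  fixes M :: "real^'n^'n"
  assumes sym: "symmetric_mat M" and S: "subspace S" and inv: "\<forall>x\<in>S. M *v x \<in> S"
    and uS: "u \<in> S" and u1: "norm u = 1"
    and max: "\<And>y. y \<in> S \<Longrightarrow> norm y = 1 \<Longrightarrow> y \<bullet> (M *v y) \<le> u \<bullet> (M *v u)"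
  shows "M *v u = (u \<bullet> (M *v u)) *\<^sub>R u"
proof -
  define m where "m = u \<bullet> (M *v u)"
  have uu: "u \<bullet> u = 1" using u1 by (simp add: norm_eq_1)
  have bound: "v \<bullet> (M *v v) \<le> m * (v \<bullet> v)" if "v \<in> S" for v
  proof (cases "v = 0")
    case False
    have "((1 / norm v) *\<^sub>R v) \<bullet> (M *v ((1 / norm v) *\<^sub>R v)) \<le> m"
      unfolding m_def using that False S by (intro max) (simp_all add: subspace_scale)
    then have "(v \<bullet> (M *v v)) / (norm v)\<^sup>2 \<le> m"
      by (simp add: matrix_vector_mult_scaleR power2_eq_square)
    then show ?thesis using False
      by (simp add: power2_norm_eq_inner[symmetric] divide_le_eq mult.commute)
  qed simp
  define w where "w = M *v u - m *\<^sub>R u"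
  have wS: "w \<in> S" unfolding w_def using S inv uS by (simp add: subspace_diff subspace_scale)
  have "w \<bullet> u = (M *v u) \<bullet> u - m * (u \<bullet> u)" by (simp add: w_def inner_diff_left)
  then have wu: "w \<bullet> u = 0" using uu by (simp add: m_def inner_commute)
  have "u \<bullet> (M *v w) = 0"
  proof (rule zero_if_linear_le_quadratic[where C = "m * (w \<bullet> w) - w \<bullet> (M *v w)"])
    fix s :: real
    have "u + s *\<^sub>R w \<in> S" using uS wS S by (simp add: subspace_add subspace_scale)
    then have "(u + s *\<^sub>R w) \<bullet> (M *v (u + s *\<^sub>R w)) \<le> m * ((u + s *\<^sub>R w) \<bullet> (u + s *\<^sub>R w))"
      by (rule bound)
    moreover have "w \<bullet> (M *v u) = u \<bullet> (M *v w)"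
      using symmetric_mat_inner[OF sym, of w u] by (simp add: inner_commute)
    ultimately show "2 * s * (u \<bullet> (M *v w)) \<le> s\<^sup>2 * (m * (w \<bullet> w) - w \<bullet> (M *v w))"
      using uu wu
      by (simp add: m_def matrix_vector_right_distrib matrix_vector_mult_scaleR inner_add_left
          inner_add_right inner_commute power2_eq_square algebra_simps)
  qed
  moreover have "u \<bullet> (M *v w) = w \<bullet> w"
    using symmetric_mat_inner[OF sym, of u w] wu
    by (simp add: w_def inner_diff_left inner_commute)
  ultimately show ?thesis by (simp add: w_def m_def)
qed

lemma symmetric_mat_invariant_subspace_eigenvector:
  fixes M :: "real^'n^'n"
  assumes sym: "symmetric_mat M" and S: "subspace S" and inv: "\<forall>x\<in>S. M *v x \<in> S"
    and "S \<noteq> {0}"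
  obtains u where "u \<in> S" "norm u = 1" "M *v u = (u \<bullet> (M *v u)) *\<^sub>R u"
proof -
  obtain x where x: "x \<in> S" "x \<noteq> 0" using assms(4) S subspace_0 by blast
  define K where "K = S \<inter> sphere 0 1"
  have "compact K"
    unfolding K_def using closed_subspace[OF S] by (simp add: closed_Int_compact)
  moreover have "(1 / norm x) *\<^sub>R x \<in> K"
    unfolding K_def using x S by (simp add: subspace_scale)
  moreover have "continuous_on K (\<lambda>v. v \<bullet> (M *v v))"
    by (intro continuous_intros linear_continuous_on matrix_vector_mul_bounded_linear)
  ultimately obtain u where "u \<in> K" "\<forall>y\<in>K. y \<bullet> (M *v y) \<le> u \<bullet> (M *v u)"
    using continuous_attains_sup[of K "\<lambda>v. v \<bullet> (M *v v)"] by blast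
  then show ?thesis
    using that symmetric_mat_rayleigh_max_eigenvector[OF sym S inv] unfolding K_def by auto
qed

lemma symmetric_mat_invariant_subspace_eigenbasis:
  fixes M :: "real^'n^'n"
  assumes sym: "symmetric_mat M"
  shows "subspace S \<Longrightarrow> \<forall>x\<in>S. M *v x \<in> S \<Longrightarrow>
    \<exists>B. finite B \<and> B \<subseteq> S \<and> pairwise orthogonal B \<and> (\<forall>b\<in>B. norm b = 1)
       \<and> (\<forall>b\<in>B. M *v b = (b \<bullet> (M *v b)) *\<^sub>R b) \<and> S \<subseteq> span B"
proof (induction "dim S" arbitrary: S rule: less_induct)
  case less
  show ?case
  proof (cases "S = {0}")
    case True
    then show ?thesis by (intro exI[of _ "{}"]) (auto simp: pairwise_def)
  next
    case False
    obtain u where u: "u \<in> S" "norm u = 1" "M *v u = (u \<bullet> (M *v u)) *\<^sub>R u"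
      using symmetric_mat_invariant_subspace_eigenvector[OF sym less.prems False] by blast
    have uu: "u \<bullet> u = 1" using u by (simp add: norm_eq_1)
    define S' where "S' = {y\<in>S. y \<bullet> u = 0}"
    have subS': "subspace S'" unfolding S'_def subspace_def using less.prems(1)
      by (auto simp: subspace_0 subspace_add subspace_scale inner_add_left)
    have invS': "\<forall>y\<in>S'. M *v y \<in> S'"
    proof
      fix y assume y: "y \<in> S'"
      have "(M *v y) \<bullet> u = y \<bullet> (M *v u)" using symmetric_mat_inner[OF sym] by blast
      also have "\<dots> = (u \<bullet> (M *v u)) * (y \<bullet> u)" using arg_cong[OF u(3), of "\<lambda>z. y \<bullet> z"] by simp
      finally show "M *v y \<in> S'" using y less.prems(2) by (simp add: S'_def)
    qed
    have "u \<notin> S'" using uu by (simp add: S'_def)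
    then have "S' \<subset> S" using u(1) unfolding S'_def by blast
    then have "dim S' < dim S"
      using dim_psubset subS' less.prems(1) by (metis span_eq_iff)
    then obtain B' where B': "finite B'" "B' \<subseteq> S'" "pairwise orthogonal B'" "\<forall>b\<in>B'. norm b = 1"
       "\<forall>b\<in>B'. M *v b = (b \<bullet> (M *v b)) *\<^sub>R b" "S' \<subseteq> span B'"
      using less.hyps[OF _ subS' invS'] by blast
    have "S \<subseteq> span (insert u B')"
    proof
      fix y assume y: "y \<in> S"
      have "y - (y \<bullet> u) *\<^sub>R u \<in> S'" unfolding S'_def using y u(1) uu less.prems(1)
        by (simp add: subspace_diff subspace_scale inner_diff_left)
      then have "y - (y \<bullet> u) *\<^sub>R u \<in> span (insert u B')"
        using B'(6) span_mono[of B' "insert u B'"] by auto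
      moreover have "(y \<bullet> u) *\<^sub>R u \<in> span (insert u B')" by (simp add: span_base span_scale)
      ultimately show "y \<in> span (insert u B')" using span_add by fastforce
    qed
    moreover have "pairwise orthogonal (insert u B')"
      using B'(2,3) by (auto simp: pairwise_insert S'_def orthogonal_def inner_commute)
    ultimately show ?thesis
      using B' u by (intro exI[of _ "insert u B'"]) (auto simp: S'_def)
  qed
qed

theorem symmetric_mat_orthonormal_eigenbasis:
  fixes M :: "real^'n^'n"
  assumes "symmetric_mat M"
  obtains B where "orthonormal_basis B" "\<forall>b\<in>B. M *v b = (b \<bullet> (M *v b)) *\<^sub>R b"
  using symmetric_mat_invariant_subspace_eigenbasis[OF assms, of UNIV] that
  unfolding orthonormal_basis_def by (auto simp: subspace_UNIV)

section \<open>Positive and negative parts and Pucci's operator\<close>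

definition spectral_mat :: "(real^'n \<Rightarrow> real) \<Rightarrow> (real^'n) set \<Rightarrow> real^'n^'n" where
  "spectral_mat f B = (\<chi> i j. \<Sum>b\<in>B. f b * b $ i * b $ j)"

lemma spectral_mat_mult_vec: "spectral_mat f B *v v = (\<Sum>b\<in>B. (f b * (b \<bullet> v)) *\<^sub>R b)"
proof -
  have "(spectral_mat f B *v v) $ i = (\<Sum>b\<in>B. (f b * (b \<bullet> v)) *\<^sub>R b) $ i" for i
  proof -
    have "(spectral_mat f B *v v) $ i = (\<Sum>j\<in>UNIV. \<Sum>b\<in>B. f b * b $ i * (b $ j * v $ j))"
      by (simp add: spectral_mat_def matrix_vector_mult_def sum_distrib_right mult.assoc)
    also have "\<dots> = (\<Sum>b\<in>B. f b * b $ i * (b \<bullet> v))"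
      by (subst sum.swap) (simp add: inner_vec_def sum_distrib_left)
    finally show ?thesis by (simp add: sum_component mult.commute mult.left_commute)
  qed
  then show ?thesis by (simp add: vec_eq_iff)
qed

lemma spectral_mat_eigenvector:
  assumes "orthonormal_basis B" "c \<in> B"
  shows "spectral_mat f B *v c = f c *\<^sub>R c"
proof -
  have "spectral_mat f B *v c = (\<Sum>b\<in>B. (if b = c then f c else 0) *\<^sub>R b)"
    unfolding spectral_mat_mult_vec
    by (intro sum.cong refl) (simp add: orthonormal_basis_inner[OF assms(1) _ assms(2)])
  also have "\<dots> = f c *\<^sub>R c"
    using assms unfolding orthonormal_basis_def
    by (simp add: if_distrib[of "\<lambda>x. x *\<^sub>R _"] sum.delta' cong: if_cong)
  finally show ?thesis .
qed

lemma matrix_eq_spectral_mat: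
  assumes "orthonormal_basis B" "\<forall>b\<in>B. (A::real^'n^'n) *v b = f b *\<^sub>R b"
  shows "A = spectral_mat f B"
proof -
  have "A *v v = spectral_mat f B *v v" for v
  proof -
    have "A *v v = A *v (\<Sum>b\<in>B. (b \<bullet> v) *\<^sub>R b)"
      using orthonormal_basis_expansion[OF assms(1)] by metis
    also have "\<dots> = (\<Sum>b\<in>B. (f b * (b \<bullet> v)) *\<^sub>R b)"
      using assms(2)
      by (simp add: linear_sum[OF matrix_vector_mul_linear] matrix_vector_mult_scaleR mult.commute)
    finally show ?thesis by (simp add: spectral_mat_mult_vec)
  qed
  then show ?thesis by (simp add: matrix_eq)
qed

lemma spectral_mat_diff: "spectral_mat f B - spectral_mat g B = spectral_mat (\<lambda>b. f b - g b) B"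
  by (simp add: spectral_mat_def vec_eq_iff sum_subtractf left_diff_distrib)

lemma spectral_mat_mult:
  assumes "orthonormal_basis B"
  shows "spectral_mat f B ** spectral_mat g B = spectral_mat (\<lambda>b. f b * g b) B"
  using assms
  by (intro matrix_eq_spectral_mat)
     (simp_all add: spectral_mat_eigenvector matrix_vector_mul_assoc[symmetric]
        matrix_vector_mult_scaleR)

lemma spectral_mat_zero: "spectral_mat (\<lambda>b. 0) B = 0"
  by (simp add: spectral_mat_def vec_eq_iff)

lemma psd_spectral_mat:
  assumes "orthonormal_basis B" "\<forall>b\<in>B. 0 \<le> f b"
  shows "psd (spectral_mat f B)"
proof -
  have quad: "x \<bullet> (spectral_mat f B *v y) = (\<Sum>b\<in>B. f b * (b \<bullet> x) * (b \<bullet> y))" for x y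
    unfolding spectral_mat_mult_vec by (simp add: inner_sum_right inner_commute mult_ac)
  have "symmetric_mat (spectral_mat f B)"
    unfolding symmetric_mat_iff_inner by (simp add: inner_commute[of "_ *v _"] quad mult_ac)
  moreover have "0 \<le> v \<bullet> (spectral_mat f B *v v)" for v
    unfolding quad using assms(2) by (intro sum_nonneg) (simp add: mult.assoc)
  ultimately show ?thesis unfolding psd_def by blast
qed

lemma trace_spectral_mat:
  assumes "orthonormal_basis B"
  shows "trace (spectral_mat f B) = (\<Sum>b\<in>B. f b)"
  unfolding trace_eq_sum_orthonormal_basis[OF assms]
  by (intro sum.cong refl)
     (simp add: spectral_mat_eigenvector[OF assms] orthonormal_basis_inner[OF assms])

text \<open>On an eigenvector \<open>b\<close> of \<open>M = P - N\<close> the vectors \<open>P b\<close> and \<open>N b\<close> are orthogonal because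
  \<open>P N = 0\<close>; positive semidefiniteness then forces the one of the wrong sign to vanish.\<close>

lemma pos_part_decomposition_unique:
  assumes B: "orthonormal_basis B" and eig: "\<forall>b\<in>B. (M::real^'n^'n) *v b = \<mu> b *\<^sub>R b"
    and P: "psd P" and N: "psd N" and MPN: "M = P - N" and PN: "P ** N = 0"
  shows "P = spectral_mat (\<lambda>b. max (\<mu> b) 0) B"
proof (rule matrix_eq_spectral_mat[OF B], intro ballI)
  fix b assume b: "b \<in> B"
  define p where "p = P *v b"
  define n where "n = N *v b"
  have pn: "p - n = \<mu> b *\<^sub>R b"
    using eig b MPN by (simp add: p_def n_def matrix_vector_mult_diff_rdistrib)
  have "p \<bullet> n = b \<bullet> (P *v (N *v b))"
    using P symmetric_mat_inner unfolding psd_def p_def n_def by blast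
  then have pn0: "p \<bullet> n = 0" by (simp add: matrix_vector_mul_assoc PN)
  have pb: "0 \<le> p \<bullet> b" and nb: "0 \<le> n \<bullet> b"
    using P N unfolding psd_def p_def n_def by (simp_all add: inner_commute)
  have pp: "p \<bullet> p = \<mu> b * (p \<bullet> b)"
    using pn0 arg_cong[OF pn, of "\<lambda>z. p \<bullet> z"] by (simp add: inner_diff_right)
  have nn: "n \<bullet> n = - \<mu> b * (n \<bullet> b)"
    using pn0 arg_cong[OF pn, of "\<lambda>z. n \<bullet> z"] by (simp add: inner_diff_right inner_commute)
  show "P *v b = max (\<mu> b) 0 *\<^sub>R b"
  proof (cases "\<mu> b > 0")
    case True
    then have "n \<bullet> n \<le> 0" using nn nb by (simp add: mult_nonneg_nonneg)
    then have "n = 0" by (meson inner_eq_zero_iff inner_ge_zero order_antisym)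
    then show ?thesis using pn True by (simp add: p_def)
  next
    case False
    then have "p \<bullet> p \<le> 0" using pp pb by (simp add: mult_nonpos_nonneg)
    then have "p = 0" by (meson inner_eq_zero_iff inner_ge_zero order_antisym)
    then show ?thesis using False by (simp add: p_def max_def)
  qed
qed

lemma pos_part_neg_part_spectral:
  assumes B: "orthonormal_basis B" and eig: "\<forall>b\<in>B. (M::real^'n^'n) *v b = \<mu> b *\<^sub>R b"
  shows "pos_part M = spectral_mat (\<lambda>b. max (\<mu> b) 0) B"
    and "neg_part M = spectral_mat (\<lambda>b. max (- \<mu> b) 0) B"
proof -
  define P where "P = spectral_mat (\<lambda>b. max (\<mu> b) 0) B"
  define N where "N = spectral_mat (\<lambda>b. max (- \<mu> b) 0) B"
  have MPN: "M = P - N"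
    unfolding matrix_eq_spectral_mat[OF B eig] P_def N_def spectral_mat_diff
    by (rule arg_cong[where f="\<lambda>f. spectral_mat f B"]) (auto simp: max_def)
  have "(\<lambda>b. max (\<mu> b) 0 * max (- \<mu> b) 0) = (\<lambda>b. 0)" by (auto simp: max_def)
  then have decomp: "psd P" "psd N" "P ** N = 0"
    unfolding P_def N_def spectral_mat_mult[OF B]
    by (simp_all add: psd_spectral_mat[OF B] spectral_mat_zero)
  have "pos_part M = P"
    unfolding pos_part_def
  proof (rule the_equality)
    show "\<exists>N. psd P \<and> psd N \<and> M = P - N \<and> P ** N = 0" using decomp MPN by blast
  next
    fix P' assume "\<exists>N. psd P' \<and> psd N \<and> M = P' - N \<and> P' ** N = 0"
    then show "P' = P" unfolding P_def using pos_part_decomposition_unique[OF B eig] by blast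
  qed
  then show "pos_part M = spectral_mat (\<lambda>b. max (\<mu> b) 0) B"
    and "neg_part M = spectral_mat (\<lambda>b. max (- \<mu> b) 0) B"
    unfolding neg_part_def by (simp_all add: P_def MPN N_def)
qed

lemma pucci_max_eq_sum_eigenvalues:
  assumes B: "orthonormal_basis B" and eig: "\<forall>b\<in>B. (M::real^'n^'n) *v b = \<mu> b *\<^sub>R b"
  shows "pucci_max lam Lam M = (\<Sum>b\<in>B. Lam * max (\<mu> b) 0 - lam * max (- \<mu> b) 0)"
  unfolding pucci_max_def pos_part_neg_part_spectral[OF B eig] trace_spectral_mat[OF B]
  by (simp add: sum_subtractf sum_distrib_left)

lemma pucci_scalar_le:
  fixes lam Lam \<alpha> \<beta> m :: real
  assumes lam: "0 < lam" "lam \<le> Lam" and "0 \<le> \<alpha>" "0 \<le> \<beta>" and m: "m \<le> \<alpha> - \<beta>"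
  shows "Lam * max m 0 - lam * max (- m) 0 \<le> Lam * \<alpha> - lam * \<beta>"
proof (cases "m \<ge> 0")
  case True
  have "Lam * m \<le> Lam * (\<alpha> - \<beta>)" using m lam by (simp add: mult_left_mono)
  moreover have "lam * \<beta> \<le> Lam * \<beta>" using lam assms by (simp add: mult_right_mono)
  ultimately show ?thesis using True by (simp add: max_def algebra_simps)
next
  case False
  have "lam * m \<le> lam * (\<alpha> - \<beta>)" using m lam by (simp add: mult_left_mono)
  moreover have "lam * \<alpha> \<le> Lam * \<alpha>" using lam assms by (simp add: mult_right_mono)
  ultimately show ?thesis using False by (simp add: max_def algebra_simps)
qed

lemma pucci_max_le_of_quadratic_form_le:
  fixes M :: "real^'n^'n"
  assumes sym: "symmetric_mat M" and lam: "0 < lam" "lam \<le> Lam" and "0 \<le> \<alpha>" "0 \<le> \<beta>"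
    and bound: "\<And>v. v \<bullet> (M *v v) \<le> \<alpha> * (q \<bullet> v)\<^sup>2 - \<beta> * (v \<bullet> v)"
  shows "pucci_max lam Lam M \<le> Lam * \<alpha> * (q \<bullet> q) - lam * \<beta> * real CARD('n)"
proof -
  obtain B where B: "orthonormal_basis B" and eig: "\<forall>b\<in>B. M *v b = (b \<bullet> (M *v b)) *\<^sub>R b"
    using symmetric_mat_orthonormal_eigenbasis[OF sym] by blast
  have "pucci_max lam Lam M
      = (\<Sum>b\<in>B. Lam * max (b \<bullet> (M *v b)) 0 - lam * max (- (b \<bullet> (M *v b))) 0)"
    by (rule pucci_max_eq_sum_eigenvalues[OF B eig])
  also have "\<dots> \<le> (\<Sum>b\<in>B. Lam * (\<alpha> * (b \<bullet> q) * (b \<bullet> q)) - lam * \<beta>)"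
  proof (rule sum_mono)
    fix b assume "b \<in> B"
    then have "b \<bullet> (M *v b) \<le> \<alpha> * (b \<bullet> q) * (b \<bullet> q) - \<beta>"
      using bound[of b] orthonormal_basis_inner[OF B, of b b]
      by (simp add: power2_eq_square inner_commute mult.assoc)
    then show "Lam * max (b \<bullet> (M *v b)) 0 - lam * max (- (b \<bullet> (M *v b))) 0
        \<le> Lam * (\<alpha> * (b \<bullet> q) * (b \<bullet> q)) - lam * \<beta>"
      using assms by (intro pucci_scalar_le) (simp_all add: mult.assoc)
  qed
  also have "\<dots> = Lam * \<alpha> * (q \<bullet> q) - lam * \<beta> * real (card B)"
    by (simp add: orthonormal_basis_parseval[OF B, of q q] sum_subtractf sum_distrib_left mult_ac)
  finally show ?thesis by (simp add: card_orthonormal_basis[OF B])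
qed

section \<open>Test functions\<close>

lemma C21_testD:
  assumes "C21_test phi Dx Dxx Dt U" "(x, t) \<in> U"
  shows "((\<lambda>y. phi (y, t)) has_derivative (\<lambda>h. Dx (x, t) \<bullet> h)) (at x)"
    and "((\<lambda>y. Dx (y, t)) has_derivative (\<lambda>h. Dxx (x, t) *v h)) (at x)"
    and "((\<lambda>s. phi (x, s)) has_real_derivative Dt (x, t)) (at t)"
  using assms unfolding C21_test_def by auto

lemma C21_test_line_derivative:
  assumes C: "C21_test phi Dx Dxx Dt U" and "(a + s *\<^sub>R u, t) \<in> U"
  shows "((\<lambda>r. phi (a + r *\<^sub>R u, t)) has_real_derivative (Dx (a + s *\<^sub>R u, t) \<bullet> u)) (at s)"
proof -
  have "((\<lambda>r. a + r *\<^sub>R u) has_derivative (\<lambda>h. h *\<^sub>R u)) (at s)"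
    by (auto intro!: derivative_eq_intros)
  from has_derivative_compose[OF this C21_testD(1)[OF assms]]
  show ?thesis
    by (simp add: has_field_derivative_def mult.commute[of _ "Dx (a + s *\<^sub>R u, t) \<bullet> u"])
qed

lemma C21_test_line_derivative_gradient:
  assumes C: "C21_test phi Dx Dxx Dt U" and "(a + s *\<^sub>R u, t) \<in> U"
  shows "((\<lambda>r. Dx (a + r *\<^sub>R u, t) \<bullet> w) has_real_derivative ((Dxx (a + s *\<^sub>R u, t) *v u) \<bullet> w)) (at s)"
proof -
  have "((\<lambda>r. a + r *\<^sub>R u) has_derivative (\<lambda>h. h *\<^sub>R u)) (at s)"
    by (auto intro!: derivative_eq_intros)
  from has_derivative_compose[OF this C21_testD(2)[OF assms]]
  have "((\<lambda>r. Dx (a + r *\<^sub>R u, t) \<bullet> w) has_derivative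
      (\<lambda>h. (Dxx (a + s *\<^sub>R u, t) *v (h *\<^sub>R u)) \<bullet> w)) (at s)"
    by (rule has_derivative_inner_left)
  then show ?thesis
    by (simp add: has_field_derivative_def matrix_vector_mult_scaleR
        mult.commute[of _ "(Dxx (a + s *\<^sub>R u, t) *v u) \<bullet> w"])
qed

lemma C21_test_second_difference_mvt:
  assumes C: "C21_test phi Dx Dxx Dt U" and h: "0 < h"
    and inU: "\<And>\<xi> r. 0 \<le> \<xi> \<Longrightarrow> \<xi> \<le> h \<Longrightarrow> 0 \<le> r \<Longrightarrow> r \<le> h \<Longrightarrow> (x + \<xi> *\<^sub>R u + r *\<^sub>R w, t) \<in> U"
  obtains \<xi> r where "0 < \<xi>" "\<xi> < h" "0 < r" "r < h"
    "phi (x + h *\<^sub>R u + h *\<^sub>R w, t) - phi (x + h *\<^sub>R u, t) - phi (x + h *\<^sub>R w, t) + phi (x, t)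
       = h * h * ((Dxx (x + \<xi> *\<^sub>R u + r *\<^sub>R w, t) *v w) \<bullet> u)"
proof -
  define g where "g s = phi ((x + h *\<^sub>R w) + s *\<^sub>R u, t) - phi (x + s *\<^sub>R u, t)" for s
  define g' where "g' s = Dx ((x + h *\<^sub>R w) + s *\<^sub>R u, t) \<bullet> u - Dx (x + s *\<^sub>R u, t) \<bullet> u" for s
  have "(g has_real_derivative g' s) (at s)" if "0 \<le> s" "s \<le> h" for s
    unfolding g_def g'_def
    using inU[of s h] inU[of s 0] that h
    by (intro DERIV_diff C21_test_line_derivative[OF C]) (simp_all add: algebra_simps)
  then obtain \<xi> where \<xi>: "0 < \<xi>" "\<xi> < h" "g h - g 0 = h * g' \<xi>"
    using MVT2[of 0 h g g'] h by force
  define k where "k r = Dx ((x + \<xi> *\<^sub>R u) + r *\<^sub>R w, t) \<bullet> u" for r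
  have "(k has_real_derivative (Dxx (x + \<xi> *\<^sub>R u + r *\<^sub>R w, t) *v w) \<bullet> u) (at r)"
    if "0 \<le> r" "r \<le> h" for r
    unfolding k_def using inU[of \<xi> r] that \<xi> by (intro C21_test_line_derivative_gradient[OF C]) simp
  then obtain r where r: "0 < r" "r < h" "k h - k 0 = h * ((Dxx (x + \<xi> *\<^sub>R u + r *\<^sub>R w, t) *v w) \<bullet> u)"
    using MVT2[of 0 h k] h by force
  have "g' \<xi> = k h - k 0" unfolding g'_def k_def by (simp add: algebra_simps)
  moreover have "g h - g 0 = phi (x + h *\<^sub>R u + h *\<^sub>R w, t) - phi (x + h *\<^sub>R u, t) - phi (x + h *\<^sub>R w, t) + phi (x, t)"
    unfolding g_def by (simp add: algebra_simps)
  ultimately show ?thesis using that \<xi> r by simp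
qed

lemma isCont_eq_if_eq_arbitrarily_close:
  fixes f g :: "'a::metric_space \<Rightarrow> real"
  assumes "isCont f x" "isCont g x"
    and close: "\<And>m. 0 < m \<Longrightarrow> \<exists>p q. dist p x < m \<and> dist q x < m \<and> f p = g q"
  shows "f x = g x"
proof (rule ccontr)
  assume "f x \<noteq> g x"
  define e where "e = \<bar>f x - g x\<bar> / 2"
  have e: "0 < e" using \<open>f x \<noteq> g x\<close> by (simp add: e_def)
  obtain d1 where d1: "0 < d1" "\<And>y. dist y x < d1 \<Longrightarrow> dist (f y) (f x) < e"
    using assms(1) e unfolding continuous_at_eps_delta by blast
  obtain d2 where d2: "0 < d2" "\<And>y. dist y x < d2 \<Longrightarrow> dist (g y) (g x) < e"
    using assms(2) e unfolding continuous_at_eps_delta by blast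
  obtain p q where "dist p x < min d1 d2" "dist q x < min d1 d2" "f p = g q"
    using close[of "min d1 d2"] d1 d2 by auto
  then have "\<bar>f x - g x\<bar> < 2 * e"
    using d1(2)[of p] d2(2)[of q] by (simp add: dist_real_def)
  then show False by (simp add: e_def)
qed

text \<open>Schwarz's theorem: the second differences along \<open>u, w\<close> and \<open>w, u\<close> coincide, so
  \<open>(Dxx w) \<bullet> u\<close> and \<open>(Dxx u) \<bullet> w\<close> take equal values at points arbitrarily close to \<open>x\<close>.\<close>

lemma C21_test_hessian_symmetric:
  assumes C: "C21_test phi Dx Dxx Dt U" and "(x, t) \<in> U"
  shows "symmetric_mat (Dxx (x, t))"
  unfolding symmetric_mat_iff_inner
proof (intro allI)
  fix u w :: "real^'a"
  have oU: "open U" using C unfolding C21_test_def by blast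
  obtain \<epsilon> where \<epsilon>: "0 < \<epsilon>" "ball (x, t) \<epsilon> \<subseteq> U"
    using oU assms(2) open_contains_ball by blast
  have "isCont Dxx (x, t)"
    using C oU assms(2) unfolding C21_test_def continuous_on_eq_continuous_at[OF oU] by blast
  then have cDxx: "isCont (\<lambda>y. Dxx (y, t)) x"
    by (intro continuous_at_compose[of x "\<lambda>y. (y, t)" Dxx, unfolded o_def] continuous_intros)
  have cont: "isCont (\<lambda>y. (Dxx (y, t) *v a) \<bullet> b) x" for a b
  proof -
    have "(\<lambda>y. (Dxx (y, t) *v a) \<bullet> b) = (\<lambda>y. \<Sum>i\<in>UNIV. \<Sum>j\<in>UNIV. Dxx (y, t) $ i $ j * a $ j * b $ i)"
      by (simp add: fun_eq_iff matrix_vector_mult_def inner_vec_def sum_distrib_right)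
    then show ?thesis by (simp only:) (intro continuous_intros isCont_vec_nth cDxx)
  qed
  define R where "R = norm u + norm w + 1"
  have R: "0 < R" "norm u \<le> R" "norm w \<le> R"
    unfolding R_def using norm_ge_zero[of u] norm_ge_zero[of w] by linarith+
  have near: "dist (x + \<xi> *\<^sub>R a + r *\<^sub>R b) x < m"
    if "0 \<le> \<xi>" "\<xi> \<le> m / (4 * R)" "0 \<le> r" "r \<le> m / (4 * R)" "norm a \<le> R" "norm b \<le> R" "0 < m"
    for \<xi> r a b m
  proof -
    have "dist (x + \<xi> *\<^sub>R a + r *\<^sub>R b) x \<le> \<xi> * norm a + r * norm b"
      using that norm_triangle_ineq[of "\<xi> *\<^sub>R a" "r *\<^sub>R b"] by (simp add: dist_norm)
    also have "\<dots> \<le> m / (4 * R) * R + m / (4 * R) * R"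
      using that by (intro add_mono mult_mono) auto
    also have "\<dots> < m" using that R by simp
    finally show ?thesis .
  qed
  have "(Dxx (x, t) *v w) \<bullet> u = (Dxx (x, t) *v u) \<bullet> w"
  proof (rule isCont_eq_if_eq_arbitrarily_close[OF cont cont])
    fix m :: real assume "0 < m"
    define h where "h = min m \<epsilon> / (4 * R)"
    have h: "0 < h" using \<open>0 < m\<close> \<epsilon> R by (simp add: h_def)
    have hm: "h \<le> m / (4 * R)" using R by (simp add: h_def divide_right_mono)
    have inU: "(x + \<xi> *\<^sub>R a + r *\<^sub>R b, t) \<in> U"
      if "0 \<le> \<xi>" "\<xi> \<le> h" "0 \<le> r" "r \<le> h" "norm a \<le> R" "norm b \<le> R" for \<xi> r a b
      using near[of \<xi> "min m \<epsilon>" r a b] that \<epsilon> \<open>0 < m\<close>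
      by (intro subsetD[OF \<epsilon>(2)]) (simp add: h_def dist_Pair_Pair dist_commute)
    obtain \<xi>1 r1 where p1: "0 < \<xi>1" "\<xi>1 < h" "0 < r1" "r1 < h"
      "phi (x + h *\<^sub>R u + h *\<^sub>R w, t) - phi (x + h *\<^sub>R u, t) - phi (x + h *\<^sub>R w, t) + phi (x, t)
       = h * h * ((Dxx (x + \<xi>1 *\<^sub>R u + r1 *\<^sub>R w, t) *v w) \<bullet> u)"
      using C21_test_second_difference_mvt[OF C h, of x u w t] inU R by blast
    obtain \<xi>2 r2 where p2: "0 < \<xi>2" "\<xi>2 < h" "0 < r2" "r2 < h"
      "phi (x + h *\<^sub>R w + h *\<^sub>R u, t) - phi (x + h *\<^sub>R w, t) - phi (x + h *\<^sub>R u, t) + phi (x, t)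
       = h * h * ((Dxx (x + \<xi>2 *\<^sub>R w + r2 *\<^sub>R u, t) *v u) \<bullet> w)"
      using C21_test_second_difference_mvt[OF C h, of x w u t] inU R by blast
    have "x + h *\<^sub>R w + h *\<^sub>R u = x + h *\<^sub>R u + h *\<^sub>R w" by (simp add: algebra_simps)
    then have "h * h * ((Dxx (x + \<xi>1 *\<^sub>R u + r1 *\<^sub>R w, t) *v w) \<bullet> u)
        = h * h * ((Dxx (x + \<xi>2 *\<^sub>R w + r2 *\<^sub>R u, t) *v u) \<bullet> w)"
      using p1(5) p2(5) by (simp only:)
    then have "(Dxx (x + \<xi>1 *\<^sub>R u + r1 *\<^sub>R w, t) *v w) \<bullet> u = (Dxx (x + \<xi>2 *\<^sub>R w + r2 *\<^sub>R u, t) *v u) \<bullet> w"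
      using h by simp
    moreover have "dist (x + \<xi>1 *\<^sub>R u + r1 *\<^sub>R w) x < m" "dist (x + \<xi>2 *\<^sub>R w + r2 *\<^sub>R u) x < m"
      using p1 p2 R hm \<open>0 < m\<close> by (auto intro!: near)
    ultimately show "\<exists>p q. dist p x < m \<and> dist q x < m
        \<and> (Dxx (p, t) *v w) \<bullet> u = (Dxx (q, t) *v u) \<bullet> w"
      by blast
  qed
  then show "(Dxx (x, t) *v u) \<bullet> w = u \<bullet> (Dxx (x, t) *v w)"
    by (simp add: inner_commute)
qed

lemma nonneg_second_derivative_at_local_min:
  fixes g g' :: "real \<Rightarrow> real"
  assumes d: "0 < d" and dg: "\<And>r. \<bar>r\<bar> < d \<Longrightarrow> (g has_real_derivative g' r) (at r)"
    and dg': "(g' has_real_derivative c) (at 0)" and min: "\<And>r. \<bar>r\<bar> < d \<Longrightarrow> g 0 \<le> g r"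
  shows "0 \<le> c"
proof (rule ccontr)
  assume "\<not> 0 \<le> c"
  have "g' 0 = 0"
    by (rule DERIV_local_min[OF dg[of 0] d]) (use d min in auto)
  then have "((\<lambda>y. g' y / y) \<longlongrightarrow> c) (at_right 0)"
    using dg' by (simp add: has_field_derivative_iff filterlim_at_split)
  then have "eventually (\<lambda>y. g' y / y < 0) (at_right 0)"
    using \<open>\<not> 0 \<le> c\<close> by (intro order_tendstoD(2)) auto
  moreover have "eventually (\<lambda>y. y \<in> {0<..<d}) (at_right (0::real))"
    using d by (rule eventually_at_right_real)
  ultimately have "eventually (\<lambda>y. g' y / y < 0 \<and> y \<in> {0<..<d}) (at_right 0)"
    by (rule eventually_conj)
  then obtain e where e: "0 < e" "\<And>y. 0 < y \<Longrightarrow> y < e \<Longrightarrow> g' y / y < 0 \<and> y \<in> {0<..<d}"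
    unfolding eventually_at_right_field by auto
  define r where "r = e / 2"
  have r: "0 < r" "r < e" "r < d" using e(1) e(2)[of r] by (auto simp: r_def)
  obtain z where z: "0 < z" "z < r" "g r - g 0 = r * g' z"
    using MVT2[of 0 r g g'] r dg by force
  have "g' z < 0" using e(2)[of z] z r by (simp add: divide_less_0_iff)
  then have "r * g' z < 0" using r(1) by (simp add: mult_pos_neg)
  then have "g r < g 0" using z(3) by linarith
  moreover have "g 0 \<le> g r" using min r by auto
  ultimately show False by simp
qed

lemma nonneg_derivative_if_le_on_left:
  fixes f :: "real \<Rightarrow> real"
  assumes df: "(f has_real_derivative D) (at t)" and d: "0 < d"
    and le: "\<And>s. t - d < s \<Longrightarrow> s < t \<Longrightarrow> f s \<le> f t"
  shows "0 \<le> D"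
proof -
  have lim: "((\<lambda>y. (f y - f t) / (y - t)) \<longlongrightarrow> D) (at_left t)"
    using df by (simp add: has_field_derivative_iff filterlim_at_split)
  have "eventually (\<lambda>y. y \<in> {t - d<..<t}) (at_left t)"
    using d by (intro eventually_at_left_real) simp
  then have "eventually (\<lambda>y. 0 \<le> (f y - f t) / (y - t)) (at_left t)"
    by eventually_elim (use le in \<open>auto intro!: divide_nonpos_neg\<close>)
  then show ?thesis using lim by (intro tendsto_lowerbound) auto
qed

lemma C21_test_hessian_le_at_touching:
  assumes C: "C21_test phi Dx Dxx Dt U" and xt: "(x, t) \<in> U"
    and min: "\<forall>z\<in>U. u (x, t) - phi (x, t) \<le> u z - phi z"
    and du: "\<And>r. ((\<lambda>r. u (x + r *\<^sub>R v, t)) has_real_derivative G' r) (at r)"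
    and dG': "(G' has_real_derivative c) (at 0)"
  shows "v \<bullet> (Dxx (x, t) *v v) \<le> c"
proof -
  have "open U" using C unfolding C21_test_def by blast
  then obtain \<epsilon> where \<epsilon>: "0 < \<epsilon>" "ball (x, t) \<epsilon> \<subseteq> U" using xt open_contains_ball by blast
  define d where "d = \<epsilon> / (norm v + 1)"
  have d: "0 < d" using \<epsilon>(1) by (simp add: d_def add_nonneg_pos)
  have inU: "(x + r *\<^sub>R v, t) \<in> U" if "\<bar>r\<bar> < d" for r
  proof -
    have "\<bar>r\<bar> * norm v \<le> \<bar>r\<bar> * (norm v + 1)" by (simp add: mult_left_mono)
    also have "\<dots> < \<epsilon>" using that by (simp add: d_def pos_less_divide_eq add_nonneg_pos)
    finally show ?thesis using \<epsilon>(2) by (auto simp: dist_Pair_Pair dist_norm)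
  qed
  have "0 \<le> c - (Dxx (x, t) *v v) \<bullet> v"
  proof (rule nonneg_second_derivative_at_local_min[OF d,
        where g = "\<lambda>r. u (x + r *\<^sub>R v, t) - phi (x + r *\<^sub>R v, t)"
          and g' = "\<lambda>r. G' r - Dx (x + r *\<^sub>R v, t) \<bullet> v"])
    fix r :: real assume "\<bar>r\<bar> < d"
    then show "((\<lambda>r. u (x + r *\<^sub>R v, t) - phi (x + r *\<^sub>R v, t)) has_real_derivative
        G' r - Dx (x + r *\<^sub>R v, t) \<bullet> v) (at r)"
      and "u (x + 0 *\<^sub>R v, t) - phi (x + 0 *\<^sub>R v, t) \<le> u (x + r *\<^sub>R v, t) - phi (x + r *\<^sub>R v, t)"
      using min inU by (auto intro!: DERIV_diff du C21_test_line_derivative[OF C])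
  next
    show "((\<lambda>r. G' r - Dx (x + r *\<^sub>R v, t) \<bullet> v) has_real_derivative c - (Dxx (x, t) *v v) \<bullet> v) (at 0)"
      using C21_test_line_derivative_gradient[OF C, of x 0 v t v] xt
      by (intro DERIV_diff dG') simp_all
  qed
  then show ?thesis by (simp add: inner_commute)
qed

lemma C21_test_time_derivative_at_touching:
  assumes C: "C21_test phi Dx Dxx Dt U" and xt: "(x, t) \<in> U"
    and min: "\<forall>z\<in>U. u (x, t) - phi (x, t) \<le> u z - phi z"
    and du: "((\<lambda>s. u (x, s)) has_real_derivative T) (at t)"
  shows "Dt (x, t) = T"
proof -
  have "open U" using C unfolding C21_test_def by blast
  then obtain \<epsilon> where \<epsilon>: "0 < \<epsilon>" "ball (x, t) \<epsilon> \<subseteq> U" using xt open_contains_ball by blast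
  have "((\<lambda>s. u (x, s) - phi (x, s)) has_real_derivative T - Dt (x, t)) (at t)"
    by (intro DERIV_diff du C21_testD(3)[OF C xt])
  moreover have "\<forall>s. \<bar>t - s\<bar> < \<epsilon> \<longrightarrow> u (x, t) - phi (x, t) \<le> u (x, s) - phi (x, s)"
  proof (intro allI impI)
    fix s assume "\<bar>t - s\<bar> < \<epsilon>"
    then have "(x, s) \<in> U" by (intro subsetD[OF \<epsilon>(2)]) (simp add: dist_Pair_Pair dist_real_def)
    then show "u (x, t) - phi (x, t) \<le> u (x, s) - phi (x, s)" using min by blast
  qed
  ultimately have "T - Dt (x, t) = 0" by (rule DERIV_local_min[OF _ \<epsilon>(1)])
  then show ?thesis by simp
qed

lemma C21_test_time_derivative_nonneg_at_touching:
  assumes C: "C21_test phi Dx Dxx Dt U" and xt: "(x, t) \<in> U"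
    and min: "\<forall>z\<in>U. u (x, t) - phi (x, t) \<le> u z - phi z"
    and past: "\<And>s. s < t \<Longrightarrow> u (x, s) \<le> u (x, t)"
  shows "0 \<le> Dt (x, t)"
proof -
  have "open U" using C unfolding C21_test_def by blast
  then obtain \<epsilon> where \<epsilon>: "0 < \<epsilon>" "ball (x, t) \<epsilon> \<subseteq> U" using xt open_contains_ball by blast
  show ?thesis
  proof (rule nonneg_derivative_if_le_on_left[OF C21_testD(3)[OF C xt] \<epsilon>(1)])
    fix s assume s: "t - \<epsilon> < s" "s < t"
    then have "(x, s) \<in> U" using \<epsilon>(2) by (auto simp: dist_Pair_Pair dist_real_def)
    then show "phi (x, s) \<le> phi (x, t)" using min past[OF s(2)] by force
  qed
qed

section \<open>The fundamental solution \<open>Phi\<close>\<close>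

lemma Phi_pos:
  "0 < t \<Longrightarrow> Phi lam Lam (x::real^'n, t)
     = t powr (- (real CARD('n) * lam / (2 * Lam))) * exp (- (norm x)\<^sup>2 / (4 * Lam * t))"
  by (simp add: Phi_def)

lemma Phi_nonpos: "t \<le> 0 \<Longrightarrow> Phi lam Lam (x::real^'n, t) = 0"
  by (simp add: Phi_def)

lemma Phi_nonneg: "0 \<le> Phi lam Lam (z::(real^'n) \<times> real)"
  by (cases z) (simp add: Phi_def)

lemma Phi_scaling:
  assumes k: "0 < k" and "0 < Lam"
  shows "Phi lam Lam (k *\<^sub>R (x::real^'n), k\<^sup>2 * t)
    = k powr (- (real CARD('n) * lam / Lam)) * Phi lam Lam (x, t)"
proof (cases "0 < t")
  case False
  then have "\<not> 0 < k\<^sup>2 * t" using k by (simp add: zero_less_mult_iff)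
  then show ?thesis using False by (simp add: Phi_def)
next
  case True
  define a where "a = real CARD('n) * lam / (2 * Lam)"
  have "(k\<^sup>2 * t) powr (- a) = (k powr 2) powr (- a) * t powr (- a)"
    using k True by (simp add: powr_mult powr_realpow)
  also have "\<dots> = k powr (- (real CARD('n) * lam / Lam)) * t powr (- a)"
    using \<open>0 < Lam\<close> by (simp add: powr_powr a_def)
  finally have "(k\<^sup>2 * t) powr (- a) = k powr (- (real CARD('n) * lam / Lam)) * t powr (- a)" .
  moreover have "- (norm (k *\<^sub>R x))\<^sup>2 / (4 * Lam * (k\<^sup>2 * t)) = - (norm x)\<^sup>2 / (4 * Lam * t)"
    using k by (simp add: power_mult_distrib)
  ultimately show ?thesis
    using k True by (simp add: Phi_pos a_def mult.assoc)
qed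

lemma lsc_at_Phi:
  assumes "0 < Lam"
  shows "lsc_at (Phi lam Lam :: (real^'n) \<times> real \<Rightarrow> real) z"
  unfolding lsc_at_def
proof (intro allI impI)
  fix c assume c: "c < Phi lam Lam z"
  obtain x t where z: "z = (x, t)" by (cases z)
  show "\<forall>\<^sub>F w in at z. c < Phi lam Lam w"
  proof (cases "0 < t")
    case False
    then have "c < 0" using c z Phi_nonpos[of t lam Lam x] by simp
    show ?thesis
    proof (rule always_eventually, intro allI)
      fix w show "c < Phi lam Lam w" using Phi_nonneg[of lam Lam w] \<open>c < 0\<close> by linarith
    qed
  next
    case True
    define F where "F w = snd w powr (- (real CARD('n) * lam / (2 * Lam)))
      * exp (- (norm (fst w))\<^sup>2 / (4 * Lam * snd w))" for w :: "(real^'n) \<times> real"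
    have "isCont F z" unfolding F_def using True z assms by (intro continuous_intros) auto
    moreover have "eventually (\<lambda>w. F w = Phi lam Lam w) (nhds z)"
    proof (rule eventually_nhds_in_open[of "{w. 0 < snd w}", THEN eventually_mono])
      show "open {w :: (real^'n) \<times> real. 0 < snd w}"
        by (intro open_Collect_less continuous_intros)
    qed (use True z in \<open>auto simp: F_def Phi_pos\<close>)
    ultimately have "isCont (Phi lam Lam) z" using isCont_cong by blast
    then show ?thesis using c unfolding isCont_def by (rule order_tendstoD(1))
  qed
qed

lemma power2_norm_add_scaleR:
  fixes x v :: "'a::real_inner"
  shows "(norm (x + r *\<^sub>R v))\<^sup>2 = x \<bullet> x + 2 * r * (x \<bullet> v) + r\<^sup>2 * (v \<bullet> v)"
  unfolding power2_norm_eq_inner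
  by (simp add: inner_add_left inner_add_right inner_commute power2_eq_square algebra_simps)

lemma Phi_line_has_derivative:
  assumes "0 < t" "0 < Lam"
  shows "((\<lambda>r. Phi lam Lam (x + r *\<^sub>R v :: real^'n, t)) has_real_derivative
    Phi lam Lam (x + r *\<^sub>R v, t) * (- ((x + r *\<^sub>R v) \<bullet> v) / (2 * Lam * t))) (at r)"
proof -
  define q where "q r = - (norm (x + r *\<^sub>R v))\<^sup>2 / (4 * Lam * t)" for r
  have q: "q r = - (x \<bullet> x + 2 * r * (x \<bullet> v) + r\<^sup>2 * (v \<bullet> v)) / (4 * Lam * t)" for r
    unfolding q_def power2_norm_add_scaleR ..
  have "((\<lambda>r. x \<bullet> x + 2 * r * (x \<bullet> v) + r\<^sup>2 * (v \<bullet> v)) has_real_derivative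
      2 * (x \<bullet> v) + 2 * r * (v \<bullet> v)) (at r)"
    by (auto intro!: derivative_eq_intros)
  from DERIV_cdivide[OF DERIV_minus[OF this], of "4 * Lam * t"]
  have "(q has_real_derivative - ((x + r *\<^sub>R v) \<bullet> v) / (2 * Lam * t)) (at r)"
    unfolding q[abs_def]
    by (rule DERIV_cong) (use assms in \<open>simp add: inner_add_left field_simps\<close>)
  from DERIV_cmult[OF DERIV_fun_exp[OF this], of "t powr - (real CARD('n) * lam / (2 * Lam))"]
  show ?thesis using assms(1) by (simp add: Phi_pos q_def mult.assoc)
qed

lemma Phi_line_second_derivative:
  assumes "0 < t" "0 < Lam"
  shows "((\<lambda>r. Phi lam Lam (x + r *\<^sub>R v :: real^'n, t) * (- ((x + r *\<^sub>R v) \<bullet> v) / (2 * Lam * t)))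
    has_real_derivative Phi lam Lam (x, t) * ((x \<bullet> v / (2 * Lam * t))\<^sup>2 - v \<bullet> v / (2 * Lam * t))) (at 0)"
proof -
  have "((\<lambda>r. (x + r *\<^sub>R v) \<bullet> v) has_real_derivative v \<bullet> v) (at 0)"
    unfolding inner_add_left inner_scaleR_left by (auto intro!: derivative_eq_intros)
  from DERIV_mult[OF Phi_line_has_derivative[OF assms, of lam x v 0]
      DERIV_cdivide[OF DERIV_minus[OF this], of "2 * Lam * t"]]
  show ?thesis by (simp add: power2_eq_square algebra_simps)
qed

lemma powr_exp_has_real_derivative:
  fixes a X L t :: real
  assumes "0 < t" "0 < L"
  shows "((\<lambda>s. s powr (- a) * exp (- X / (4 * L * s))) has_real_derivative
    t powr (- a) * exp (- X / (4 * L * t)) * (X / (4 * L * t\<^sup>2) - a / t)) (at t)"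
proof -
  have "t powr (- a - 1) = t powr (- a) / t" using assms by (simp add: powr_diff)
  then show ?thesis
    using assms by (auto intro!: derivative_eq_intros simp: field_simps power2_eq_square)
qed

lemma Phi_time_has_derivative:
  assumes "0 < t" "0 < Lam"
  shows "((\<lambda>s. Phi lam Lam (x::real^'n, s)) has_real_derivative
    Phi lam Lam (x, t) * ((norm x)\<^sup>2 / (4 * Lam * t\<^sup>2) - real CARD('n) * lam / (2 * Lam * t))) (at t)"
proof (rule has_field_derivative_transform_within_open[where S = "{0<..}"])
  show "((\<lambda>s. s powr (- (real CARD('n) * lam / (2 * Lam))) * exp (- (norm x)\<^sup>2 / (4 * Lam * s)))
      has_real_derivative
      Phi lam Lam (x, t) * ((norm x)\<^sup>2 / (4 * Lam * t\<^sup>2) - real CARD('n) * lam / (2 * Lam * t))) (at t)"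
    using powr_exp_has_real_derivative[OF assms, of "real CARD('n) * lam / (2 * Lam)" "(norm x)\<^sup>2"] assms
    by (simp add: Phi_pos)
qed (use assms in \<open>auto simp: Phi_pos\<close>)

section \<open>\<open>Phi\<close> is a viscosity supersolution\<close>

lemma Phi_touching_from_below:
  fixes phi :: "(real^'n) \<times> real \<Rightarrow> real"
  assumes lam: "0 < lam" "lam \<le> Lam" and C: "C21_test phi Dx Dxx Dt U" and xt: "(x, t) \<in> U"
    and min: "\<forall>z\<in>U. Phi lam Lam (x, t) - phi (x, t) \<le> Phi lam Lam z - phi z"
  shows "pucci_max lam Lam (Dxx (x, t)) \<le> Dt (x, t)"
proof -
  have Lam: "0 < Lam" using lam by linarith
  have sym: "symmetric_mat (Dxx (x, t))" by (rule C21_test_hessian_symmetric[OF C xt])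
  show ?thesis
  proof (cases "0 < t")
    case True
    define P where "P = Phi lam Lam (x, t)"
    define c where "c = 1 / (2 * Lam * t)"
    have "P \<ge> 0" "c > 0" using Lam True by (simp_all add: P_def c_def Phi_nonneg)
    have "v \<bullet> (Dxx (x, t) *v v) \<le> P * ((c * (x \<bullet> v))\<^sup>2 - c * (v \<bullet> v))" for v
      using C21_test_hessian_le_at_touching[OF C xt min
          Phi_line_has_derivative[OF True Lam] Phi_line_second_derivative[OF True Lam]]
      unfolding P_def c_def by simp
    then have "v \<bullet> (Dxx (x, t) *v v) \<le> P * c\<^sup>2 * (x \<bullet> v)\<^sup>2 - P * c * (v \<bullet> v)" for v
      by (simp add: power_mult_distrib right_diff_distrib mult.assoc)
    then have "pucci_max lam Lam (Dxx (x, t))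
        \<le> Lam * (P * c\<^sup>2) * (x \<bullet> x) - lam * (P * c) * real CARD('n)"
      using \<open>P \<ge> 0\<close> \<open>c > 0\<close> by (intro pucci_max_le_of_quadratic_form_le[OF sym lam]) simp_all
    also have "\<dots> = P * ((norm x)\<^sup>2 / (4 * Lam * t\<^sup>2) - real CARD('n) * lam / (2 * Lam * t))"
      using Lam True by (simp add: c_def power2_eq_square field_simps flip: power2_norm_eq_inner)
    also have "\<dots> = Dt (x, t)"
      using C21_test_time_derivative_at_touching[OF C xt min Phi_time_has_derivative[OF True Lam]]
      unfolding P_def by simp
    finally show ?thesis .
  next
    case False
    have "v \<bullet> (Dxx (x, t) *v v) \<le> 0 * (x \<bullet> v)\<^sup>2 - 0 * (v \<bullet> v)" for v
      using C21_test_hessian_le_at_touching[OF C xt min, of v "\<lambda>_. 0" 0] False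
      by (simp add: Phi_nonpos)
    then have "pucci_max lam Lam (Dxx (x, t)) \<le> 0"
      using pucci_max_le_of_quadratic_form_le[OF sym lam, of 0 0 x] by simp
    also have "0 \<le> Dt (x, t)"
      using C21_test_time_derivative_nonneg_at_touching[OF C xt min] False
      by (simp add: Phi_nonpos)
    finally show ?thesis .
  qed
qed

theorem lemma7p1:
  fixes lam Lam :: real
  assumes "0 < lam" and "lam \<le> Lam"
  shows "(\<forall>k>0. \<forall>(x::real^'n) t.
            Phi lam Lam (k *\<^sub>R x, k\<^sup>2 * t)
              = k powr (- (real CARD('n) * lam / Lam)) * Phi lam Lam (x, t))
       \<and> visc_supersol lam Lam (Phi lam Lam :: (real^'n) \<times> real \<Rightarrow> real) (UNIV - {(0, 0)})"
proof
  have Lam: "0 < Lam" using assms by linarith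
  then show "\<forall>k>0. \<forall>(x::real^'n) t.
      Phi lam Lam (k *\<^sub>R x, k\<^sup>2 * t) = k powr (- (real CARD('n) * lam / Lam)) * Phi lam Lam (x, t)"
    using Phi_scaling by blast
  show "visc_supersol lam Lam (Phi lam Lam :: (real^'n) \<times> real \<Rightarrow> real) (UNIV - {(0, 0)})"
    unfolding visc_supersol_def
  proof (intro conjI ballI allI impI)
    fix z :: "(real^'n) \<times> real"
    show "lsc_at (Phi lam Lam) z" by (rule lsc_at_Phi[OF Lam])
  next
    fix z phi Dx Dxx Dt and U :: "((real^'n) \<times> real) set"
    assume "z \<in> U \<and> U \<subseteq> UNIV - {(0, 0)} \<and> C21_test phi Dx Dxx Dt U
      \<and> (\<forall>w\<in>U. Phi lam Lam z - phi z \<le> Phi lam Lam w - phi w)"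
    then show "0 \<le> Dt z - pucci_max lam Lam (Dxx z)"
      using Phi_touching_from_below[OF assms, of phi Dx Dxx Dt U "fst z" "snd z"] by simp
  qed
qed

end
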